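(* Fix $K$ sufficiently large (as required for $\mathcal L_x(\Lambda_K^x)\subset\Lambda^{fx}_{\zeta K}$ for all $x$). For $x\in X$, $n\in\mathbb N$ and Borel probability measures $\sigma_n$ on $Y_{f^nx}$, define the probability measure $\nu_{x,n}=\dfrac{(\mathcal L_x^n)^*\sigma_n}{\langle\mathbb 1,(\mathcal L_x^n)^*\sigma_n\rangle}$ on $Y_x$. There is $C_1>0$ and $\tau\in(0,1)$ such that for all $k\in\mathbb N$, all $m,n\ge k$ and all $\psi\in\Lambda_K^x$, $$\Big|\int\psi\,d\nu_{x,n}-\int\psi\,d\nu_{x,m}\Big|\le C_1\|\psi\|_\infty\tau^k.$$ In particular $\langle\psi,\nu_x\rangle:=\lim_{n\to\infty}\langle\psi,\nu_{x,n}\rangle$ exists and defines a probability measure $\nu_x$ on $Y_x$ with $|\int\psi\,d\nu_{x,n}-\int\psi\,d\nu_x|\le C_1\|\psi\|_\infty\tau^n$.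
   Context: Standing setting. $X$ and $Y$ are compact connected Riemannian manifolds, $X\times Y$ has the metric $d((x,y),(x',y'))=d_X(x,x')+d_Y(y,y')$. $F(x,y)=(f(x),g_x(y))$ is a skew product which is a Lipschitz local homeomorphism; $Y_x=\{x\}\times Y$ is identified with $Y$. $f$ is uniformly expanding with expansion constant $\gamma>1$. Every $y$ has exactly $d$ preimages under each $g_x$. There is a continuous function $L(\cdot,\cdot)$ such that each $z$ has a neighbourhood $U_z$ on which $F$ is injective and the inverse of $F|_{U_z}$ is $L(z)$-Lipschitz on $F(U_z)$. There are $L\ge1$ and open $\mathcal A\subset X\times Y$ with: (A1) $L(z)\le L$ on $\mathcal A$ and $L(z)<\gamma^{-1}$ off $\mathcal A$; (A2) a finite cover $\mathcal U$ of $X\times Y$ by open sets on which $F$ is injective, with $\mathcal A$ covered by $q<d$ elements of $\mathcal U$ and each element of $\mathcal U$ meeting at most one curve of $F^{-1}(c)$ for every distance-minimizing geodesic $c$. The potential $\varphi$ is $\alpha$-Hölder ($0<\alpha<1$) satisfying (P): $\sup\varphi-\inf\varphi<\varepsilon_\varphi$ and $|e^\varphi|_\alpha<\varepsilon_\varphi e^{\inf\varphi}$, where $\varepsilon_\varphi>0$ satisfies $s:=e^{\varepsilon_\varphi}\frac{(d-q)\gamma^{-\alpha}+qL^\alpha}{d}<1$ and $\zeta:=s+2s\varepsilon_\varphi\,\mathrm{diam}(Y)^\alpha<1$. Fiberwise operators: $\mathcal L_x\psi(y)=\sum_{\bar y\in g_x^{-1}(y)}e^{\varphi(x,\bar y)}\psi(\bar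 y)$ from $C(Y_x)$ to $C(Y_{fx})$, $\mathcal L_x^n=\mathcal L_{f^{n-1}x}\circ\cdots\circ\mathcal L_x$, and $(\mathcal L_x^n)^*$ the dual on measures. Cones: $\Lambda_K^x=\{\psi\colon Y_x\to(0,\infty)\ \alpha\text{-Hölder}:|\psi|_\alpha\le K\inf\psi\}\cup\{0\}$, with $|\psi|_\alpha$ the $\alpha$-Hölder seminorm. *)

theory Defs
  imports "HOL-Probability.Probability"
begin

definition pdist :: "('x::metric_space \<times> 'y::metric_space) \<Rightarrow> ('x \<times> 'y) \<Rightarrow> real" where
  "pdist z w = dist (fst z) (fst w) + dist (snd z) (snd w)"

definition min_geodesic :: "('a \<Rightarrow> 'a \<Rightarrow> real) \<Rightarrow> (real \<Rightarrow> 'a) \<Rightarrow> real \<Rightarrow> real \<Rightarrow> bool" where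
  "min_geodesic dd c a b \<longleftrightarrow> a \<le> b \<and> (\<forall>s\<in>{a..b}. \<forall>t\<in>{a..b}. dd (c s) (c t) = \<bar>s - t\<bar>)"

text \<open>Abstraction of a compact connected Riemannian manifold: a compact connected
  metric space in which any two points are joined by a distance-minimizing geodesic.\<close>
definition compact_conn_geodesic_space :: "'a::metric_space itself \<Rightarrow> bool" where
  "compact_conn_geodesic_space _ \<longleftrightarrow> compact (UNIV::'a set) \<and> connected (UNIV::'a set) \<and>
     (\<forall>p q::'a. \<exists>c. c 0 = p \<and> c (dist p q) = q \<and> min_geodesic dist c 0 (dist p q))"

definition holder :: "('a \<Rightarrow> 'a \<Rightarrow> real) \<Rightarrow> real \<Rightarrow> ('a \<Rightarrow> real) \<Rightarrow> bool" where
  "holder dd \<alpha> \<psi> \<longleftrightarrow> (\<exists>C. \<forall>a b. \<bar>\<psi> a - \<psi> b\<bar> \<le> C * dd a b powr \<alpha>)"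

definition holder_semi :: "('a \<Rightarrow> 'a \<Rightarrow> real) \<Rightarrow> real \<Rightarrow> ('a \<Rightarrow> real) \<Rightarrow> real" where
  "holder_semi dd \<alpha> \<psi> = Sup ({0} \<union> {\<bar>\<psi> a - \<psi> b\<bar> / dd a b powr \<alpha> | a b. a \<noteq> b})"

definition sup_norm :: "('a \<Rightarrow> real) \<Rightarrow> real" where
  "sup_norm \<psi> = Sup (range (\<lambda>a. \<bar>\<psi> a\<bar>))"

definition skew :: "('x \<Rightarrow> 'x) \<Rightarrow> ('x \<Rightarrow> 'y \<Rightarrow> 'y) \<Rightarrow> 'x \<times> 'y \<Rightarrow> 'x \<times> 'y" where
  "skew f g z = (f (fst z), g (fst z) (snd z))"

definition lipschitz_local_homeo :: "('a::metric_space \<Rightarrow> 'a \<Rightarrow> real) \<Rightarrow> ('a \<Rightarrow> 'a) \<Rightarrow> bool" where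
  "lipschitz_local_homeo dd F \<longleftrightarrow> (\<exists>C. \<forall>z w. dd (F z) (F w) \<le> C * dd z w) \<and>
     (\<forall>z. \<exists>U h. open U \<and> z \<in> U \<and> open (F ` U) \<and> homeomorphism U (F ` U) F h)"

definition unif_expanding :: "('x::metric_space \<Rightarrow> 'x) \<Rightarrow> real \<Rightarrow> bool" where
  "unif_expanding f \<gamma> \<longleftrightarrow> \<gamma> > 1 \<and>
     (\<exists>\<delta>>0. \<forall>a b. dist a b < \<delta> \<longrightarrow> \<gamma> * dist a b \<le> dist (f a) (f b))"

definition s_const :: "real \<Rightarrow> nat \<Rightarrow> nat \<Rightarrow> real \<Rightarrow> real \<Rightarrow> real \<Rightarrow> real" where
  "s_const \<epsilon> d q \<gamma> Lc \<alpha> =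
     exp \<epsilon> * ((real d - real q) * \<gamma> powr (-\<alpha>) + real q * Lc powr \<alpha>) / real d"

definition zeta_const :: "real \<Rightarrow> nat \<Rightarrow> nat \<Rightarrow> real \<Rightarrow> real \<Rightarrow> real \<Rightarrow> real" where
  "zeta_const \<epsilon> d q \<gamma> Lc \<alpha> =
     s_const \<epsilon> d q \<gamma> Lc \<alpha>
     + 2 * s_const \<epsilon> d q \<gamma> Lc \<alpha> * \<epsilon> * diameter (UNIV::'y::metric_space set) powr \<alpha>"

definition standing_setting ::
  "('x::metric_space \<Rightarrow> 'x) \<Rightarrow> ('x \<Rightarrow> 'y::metric_space \<Rightarrow> 'y) \<Rightarrow> real \<Rightarrow> nat \<Rightarrow>
   ('x \<times> 'y \<Rightarrow> real) \<Rightarrow> real \<Rightarrow> ('x \<times> 'y) set \<Rightarrow> ('x \<times> 'y) set set \<Rightarrow> nat \<Rightarrow>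
   ('x \<times> 'y \<Rightarrow> real) \<Rightarrow> real \<Rightarrow> real \<Rightarrow> bool" where
  "standing_setting f g \<gamma> d Lf Lc A \<U> q \<phi> \<alpha> \<epsilon> \<longleftrightarrow>
     compact_conn_geodesic_space TYPE('x) \<and> compact_conn_geodesic_space TYPE('y) \<and>
     lipschitz_local_homeo pdist (skew f g) \<and>
     unif_expanding f \<gamma> \<and>
     (\<forall>x y. finite (g x -` {y}) \<and> card (g x -` {y}) = d) \<and>
     continuous_on UNIV Lf \<and>
     (\<forall>z. \<exists>U. open U \<and> z \<in> U \<and> inj_on (skew f g) U \<and>
        (\<forall>a\<in>U. \<forall>b\<in>U. pdist a b \<le> Lf z * pdist (skew f g a) (skew f g b))) \<and>
     \<comment> \<open>(A1)\<close>
     Lc \<ge> 1 \<and> open A \<and> (\<forall>z\<in>A. Lf z \<le> Lc) \<and> (\<forall>z. z \<notin> A \<longrightarrow> Lf z < 1 / \<gamma>) \<and>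
     \<comment> \<open>(A2)\<close>
     finite \<U> \<and> \<Union>\<U> = UNIV \<and> (\<forall>U\<in>\<U>. open U \<and> inj_on (skew f g) U) \<and>
     (\<exists>\<V>\<subseteq>\<U>. card \<V> = q \<and> A \<subseteq> \<Union>\<V>) \<and> q < d \<and>
     (\<forall>c a b. min_geodesic pdist c a b \<longrightarrow>
        (\<forall>U\<in>\<U>. \<forall>C1\<in>components (skew f g -` (c ` {a..b})).
           \<forall>C2\<in>components (skew f g -` (c ` {a..b})).
           C1 \<inter> U \<noteq> {} \<longrightarrow> C2 \<inter> U \<noteq> {} \<longrightarrow> C1 = C2)) \<and>
     \<comment> \<open>the potential and (P)\<close>
     0 < \<alpha> \<and> \<alpha> < 1 \<and> holder pdist \<alpha> \<phi> \<and> \<epsilon> > 0 \<and>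
     Sup (range \<phi>) - Inf (range \<phi>) < \<epsilon> \<and>
     holder_semi pdist \<alpha> (\<lambda>z. exp (\<phi> z)) < \<epsilon> * exp (Inf (range \<phi>)) \<and>
     s_const \<epsilon> d q \<gamma> Lc \<alpha> < 1 \<and> zeta_const TYPE('y) \<epsilon> d q \<gamma> Lc \<alpha> < 1"

definition Lop :: "('x \<Rightarrow> 'y \<Rightarrow> 'y) \<Rightarrow> ('x \<times> 'y \<Rightarrow> real) \<Rightarrow> 'x \<Rightarrow> ('y \<Rightarrow> real) \<Rightarrow> 'y \<Rightarrow> real" where
  "Lop g \<phi> x \<psi> y = (\<Sum>yb\<in>g x -` {y}. exp (\<phi> (x, yb)) * \<psi> yb)"

fun Lpow :: "('x \<Rightarrow> 'x) \<Rightarrow> ('x \<Rightarrow> 'y \<Rightarrow> 'y) \<Rightarrow> ('x \<times> 'y \<Rightarrow> real) \<Rightarrow> nat \<Rightarrow> 'x \<Rightarrow> ('y \<Rightarrow> real) \<Rightarrow> 'y \<Rightarrow> real" where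
  "Lpow f g \<phi> 0 x \<psi> = \<psi>"
| "Lpow f g \<phi> (Suc n) x \<psi> = Lop g \<phi> ((f ^^ n) x) (Lpow f g \<phi> n x \<psi>)"

text \<open>The hcone Lambda_K (the same on every fibre Y_x, identified with Y).\<close>
definition hcone :: "real \<Rightarrow> real \<Rightarrow> ('y::metric_space \<Rightarrow> real) set" where
  "hcone \<alpha> K = {\<psi>. (\<forall>y. \<psi> y > 0) \<and> holder dist \<alpha> \<psi> \<and>
                   holder_semi dist \<alpha> \<psi> \<le> K * Inf (range \<psi>)} \<union> {\<lambda>_. 0}"

text \<open>Integral of psi against nu_{x,n} = (L_x^n)^* sigma / <1,(L_x^n)^* sigma>, via the duality
  <psi,(L_x^n)^* sigma> = <L_x^n psi, sigma>.\<close>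
definition nu_int :: "('x \<Rightarrow> 'x) \<Rightarrow> ('x \<Rightarrow> 'y \<Rightarrow> 'y) \<Rightarrow> ('x \<times> 'y \<Rightarrow> real) \<Rightarrow> 'x \<Rightarrow> nat \<Rightarrow>
     'y measure \<Rightarrow> ('y \<Rightarrow> real) \<Rightarrow> real" where
  "nu_int f g \<phi> x n \<sigma> \<psi> =
     (\<integral>y. Lpow f g \<phi> n x \<psi> y \<partial>\<sigma>) / (\<integral>y. Lpow f g \<phi> n x (\<lambda>_. 1) y \<partial>\<sigma>)"

end

theory Submission
  imports Defs
begin

text \<open>Let L^n be the composite of the transfer operators along the orbit of x. Each transfer
  operator maps the cone with constant K into the cone with constant \<zeta> K, \<zeta> < 1, and this slack
  lets one bracket L^n \<psi> between a_k L^n 1 and b_k L^n 1 in the cone order, with b_k - a_k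
  shrinking by a fixed factor \<theta> < 1 at each step (a Birkhoff-type contraction, done by hand).
  Every nu_{x,n} with n \<ge> k integrates \<psi> into [a_k, b_k], which gives the Cauchy estimate.
  The limit measure is a weak limit of the normalised measures transported from one point of
  the last fibre; it is obtained by coding the compact fibre injectively into [0,1] and applying
  Helly's selection theorem there.\<close>

lemma Sup_le_Sup_add:
  fixes u v w :: "'a \<Rightarrow> real"
  assumes "\<And>y. c * v y \<le> u y + w y" "c > 0" "bdd_above (range u)" "bdd_above (range w)"
  shows "c * Sup (range v) \<le> Sup (range u) + Sup (range w)"
proof -
  have "c * v y \<le> Sup (range u) + Sup (range w)" for y
    using assms(1)[of y] cSup_upper[OF rangeI assms(3), of y] cSup_upper[OF rangeI assms(4), of y]
    by linarith
  then have "v y \<le> (Sup (range u) + Sup (range w)) / c" for y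
    using \<open>c > 0\<close> by (simp add: pos_le_divide_eq mult.commute)
  then have "Sup (range v) \<le> (Sup (range u) + Sup (range w)) / c" by (intro cSup_least) auto
  then show ?thesis using \<open>c > 0\<close> by (simp add: le_divide_eq mult.commute)
qed

lemma LIMSEQ_of_geometric_bound:
  fixes u :: "nat \<Rightarrow> real"
  assumes "\<And>n. \<bar>u n - l\<bar> \<le> C * \<tau> ^ n" "0 \<le> \<tau>" "\<tau> < 1"
  shows "u \<longlonglongrightarrow> l"
proof -
  have "(\<lambda>n. C * \<tau> ^ n) \<longlonglongrightarrow> 0" using assms(2,3) by (intro tendsto_mult_right_zero LIMSEQ_power_zero) auto
  then have "(\<lambda>n. u n - l) \<longlonglongrightarrow> 0"
    by (rule Lim_null_comparison[rotated]) (use assms(1) in simp)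
  then show ?thesis by (simp add: LIM_zero_iff)
qed

lemma integral_ratio_between:
  fixes F H :: "'a \<Rightarrow> real"
  assumes "prob_space \<sigma>" "integrable \<sigma> F" "integrable \<sigma> H"
    and "\<And>y. c \<le> H y" "c > 0" and "\<And>y. a * H y \<le> F y" "\<And>y. F y \<le> b * H y"
  shows "a \<le> (\<integral>y. F y \<partial>\<sigma>) / (\<integral>y. H y \<partial>\<sigma>)" "(\<integral>y. F y \<partial>\<sigma>) / (\<integral>y. H y \<partial>\<sigma>) \<le> b"
proof -
  interpret prob_space \<sigma> by fact
  have "c \<le> (\<integral>y. H y \<partial>\<sigma>)"
    using integral_mono[OF integrable_const assms(3) assms(4)] by (simp add: prob_space)
  then have pos: "(\<integral>y. H y \<partial>\<sigma>) > 0" using \<open>c > 0\<close> by linarith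
  have "a * (\<integral>y. H y \<partial>\<sigma>) \<le> (\<integral>y. F y \<partial>\<sigma>)"
    using integral_mono[OF integrable_mult_right[OF assms(3)] assms(2) assms(6)] by simp
  then show "a \<le> (\<integral>y. F y \<partial>\<sigma>) / (\<integral>y. H y \<partial>\<sigma>)" using pos by (simp add: le_divide_eq)
  have "(\<integral>y. F y \<partial>\<sigma>) \<le> b * (\<integral>y. H y \<partial>\<sigma>)"
    using integral_mono[OF assms(2) integrable_mult_right[OF assms(3)] assms(7)] by simp
  then show "(\<integral>y. F y \<partial>\<sigma>) / (\<integral>y. H y \<partial>\<sigma>) \<le> b" using pos by (simp add: divide_le_eq)
qed

lemma holder_quotients_bdd_above:
  fixes u :: "'y::metric_space \<Rightarrow> real"
  assumes "holder dist \<alpha> u"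
  shows "bdd_above ({0} \<union> {\<bar>u a - u b\<bar> / dist a b powr \<alpha> | a b. a \<noteq> b})"
proof -
  obtain C where C: "\<And>a b. \<bar>u a - u b\<bar> \<le> C * dist a b powr \<alpha>"
    using assms unfolding holder_def by blast
  have "\<bar>u a - u b\<bar> / dist a b powr \<alpha> \<le> max C 0" if "a \<noteq> b" for a b
    using C[of a b] that by (simp add: divide_le_eq le_max_iff_disj)
  then show ?thesis by (intro bdd_aboveI[of _ "max C 0"]) auto
qed

lemma holder_semi_nonneg:
  fixes u :: "'y::metric_space \<Rightarrow> real"
  assumes "holder dist \<alpha> u"
  shows "holder_semi dist \<alpha> u \<ge> 0"
proof -
  have "bdd_above ({0} \<union> {\<bar>u a - u b\<bar> / dist a b powr \<alpha> | a b. a \<noteq> b})"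
    by (rule holder_quotients_bdd_above[OF assms])
  then show ?thesis
    unfolding holder_semi_def by (intro cSup_upper) auto
qed

lemma holder_semi_bound:
  fixes u :: "'y::metric_space \<Rightarrow> real"
  assumes "holder dist \<alpha> u"
  shows "\<bar>u a - u b\<bar> \<le> holder_semi dist \<alpha> u * dist a b powr \<alpha>"
proof (cases "a = b")
  case True
  then show ?thesis using holder_semi_nonneg[OF assms] by simp
next
  case False
  have "bdd_above ({0} \<union> {\<bar>u a - u b\<bar> / dist a b powr \<alpha> | a b. a \<noteq> b})"
    by (rule holder_quotients_bdd_above[OF assms])
  then have "\<bar>u a - u b\<bar> / dist a b powr \<alpha> \<le> holder_semi dist \<alpha> u"
    unfolding holder_semi_def using False by (intro cSup_upper) auto
  then show ?thesis using False by (simp add: divide_le_eq)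
qed

lemma holder_semi_le:
  fixes u :: "'y::metric_space \<Rightarrow> real"
  assumes "\<And>a b. a \<noteq> b \<Longrightarrow> \<bar>u a - u b\<bar> \<le> B * dist a b powr \<alpha>" and "B \<ge> 0"
  shows "holder_semi dist \<alpha> u \<le> B"
  unfolding holder_semi_def using assms by (intro cSup_least) (auto simp: divide_le_eq)

lemma holder_affine:
  fixes u v :: "'y::metric_space \<Rightarrow> real" and c s t :: real
  assumes u: "holder dist \<alpha> u" and v: "holder dist \<alpha> v"
  defines "w \<equiv> \<lambda>y. c + s * u y + t * v y"
  shows "holder dist \<alpha> w"
    and "holder_semi dist \<alpha> w \<le> \<bar>s\<bar> * holder_semi dist \<alpha> u + \<bar>t\<bar> * holder_semi dist \<alpha> v"
proof -
  have bound: "\<bar>w a - w b\<bar>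
      \<le> (\<bar>s\<bar> * holder_semi dist \<alpha> u + \<bar>t\<bar> * holder_semi dist \<alpha> v) * dist a b powr \<alpha>" for a b
  proof -
    have "\<bar>w a - w b\<bar> \<le> \<bar>s\<bar> * \<bar>u a - u b\<bar> + \<bar>t\<bar> * \<bar>v a - v b\<bar>"
    proof -
      have "w a - w b = s * (u a - u b) + t * (v a - v b)"
        unfolding w_def by (simp add: algebra_simps)
      then show ?thesis by (metis abs_mult abs_triangle_ineq)
    qed
    also have "\<dots> \<le> \<bar>s\<bar> * (holder_semi dist \<alpha> u * dist a b powr \<alpha>)
                  + \<bar>t\<bar> * (holder_semi dist \<alpha> v * dist a b powr \<alpha>)"
      by (intro add_mono mult_left_mono holder_semi_bound u v) auto
    finally show ?thesis by (simp add: algebra_simps)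
  qed
  then show "holder dist \<alpha> w" unfolding holder_def by blast
  show "holder_semi dist \<alpha> w \<le> \<bar>s\<bar> * holder_semi dist \<alpha> u + \<bar>t\<bar> * holder_semi dist \<alpha> v"
    using holder_semi_nonneg[OF u] holder_semi_nonneg[OF v] by (intro holder_semi_le bound) auto
qed

lemma holder_oscillation:
  fixes u :: "'y::metric_space \<Rightarrow> real"
  assumes "holder dist \<alpha> u" "bounded (UNIV::'y set)" "\<alpha> \<ge> 0"
  shows "u a \<le> u b + holder_semi dist \<alpha> u * diameter (UNIV::'y set) powr \<alpha>"
proof -
  have "dist a b powr \<alpha> \<le> diameter (UNIV::'y set) powr \<alpha>"
    using assms(2,3) diameter_bounded_bound by (intro powr_mono2) auto
  then have "holder_semi dist \<alpha> u * dist a b powr \<alpha>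
      \<le> holder_semi dist \<alpha> u * diameter (UNIV::'y set) powr \<alpha>"
    by (intro mult_left_mono holder_semi_nonneg assms(1))
  then show ?thesis using holder_semi_bound[OF assms(1), of a b] by linarith
qed

lemma holder_bdd_above:
  fixes u :: "'y::metric_space \<Rightarrow> real"
  assumes "holder dist \<alpha> u" "bounded (UNIV::'y set)" "\<alpha> \<ge> 0"
  shows "bdd_above (range u)"
  using holder_oscillation[OF assms, of _ undefined] by (auto intro!: bdd_aboveI)

lemma holder_Sup_le_Inf:
  fixes u :: "'y::metric_space \<Rightarrow> real"
  assumes "holder dist \<alpha> u" "bounded (UNIV::'y set)" "\<alpha> \<ge> 0"
  shows "Sup (range u) \<le> Inf (range u) + holder_semi dist \<alpha> u * diameter (UNIV::'y set) powr \<alpha>"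
proof -
  have "Sup (range u) \<le> u b + holder_semi dist \<alpha> u * diameter (UNIV::'y set) powr \<alpha>" for b
    using holder_oscillation[OF assms, of _ b] by (intro cSup_least) auto
  then have "Sup (range u) - holder_semi dist \<alpha> u * diameter (UNIV::'y set) powr \<alpha> \<le> Inf (range u)"
    by (intro cInf_greatest) (auto simp: algebra_simps)
  then show ?thesis by simp
qed

lemma holder_continuous_on:
  fixes u :: "'y::metric_space \<Rightarrow> real"
  assumes "holder dist \<alpha> u" "\<alpha> > 0"
  shows "continuous_on UNIV u"
  unfolding continuous_on_iff
proof safe
  fix y :: 'y and e :: real assume e: "e > 0"
  obtain C where C: "\<And>a b. \<bar>u a - u b\<bar> \<le> C * dist a b powr \<alpha>"
    using assms unfolding holder_def by blast
  define C' where "C' = max C 0 + 1"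
  have C'pos: "C' > 0" unfolding C'_def by simp
  have "\<bar>u a - u b\<bar> \<le> C' * dist a b powr \<alpha>" for a b
    by (rule order_trans[OF C]) (auto simp: C'_def intro!: mult_right_mono)
  moreover have "C' * dist y' y powr \<alpha> < e" if "dist y' y < (e / C') powr (1 / \<alpha>)" for y'
  proof -
    have "dist y' y powr \<alpha> < ((e / C') powr (1 / \<alpha>)) powr \<alpha>"
      using that assms(2) by (intro powr_less_mono2) auto
    then show ?thesis using e C'pos assms(2) by (simp add: powr_powr field_simps)
  qed
  ultimately show "\<exists>d>0. \<forall>y'\<in>UNIV. dist y' y < d \<longrightarrow> dist (u y') (u y) < e"
    using e C'pos by (intro exI[of _ "(e / C') powr (1 / \<alpha>)"])
      (auto simp: dist_real_def intro: le_less_trans)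
qed

section \<open>The cone\<close>

lemma zero_in_hcone [simp]: "(\<lambda>_. 0) \<in> hcone \<alpha> K"
  unfolding hcone_def by auto

lemma hcone_nonzeroD:
  assumes "u \<in> hcone \<alpha> K" "u \<noteq> (\<lambda>_. 0)"
  shows "\<forall>y. u y > 0" "holder dist \<alpha> u" "holder_semi dist \<alpha> u \<le> K * Inf (range u)"
  using assms unfolding hcone_def by auto

lemma hcone_holder: "u \<in> hcone \<alpha> K \<Longrightarrow> holder dist \<alpha> u"
  unfolding hcone_def holder_def by (auto intro: exI[of _ 0])

lemma hcone_nonneg: "u \<in> hcone \<alpha> K \<Longrightarrow> u y \<ge> 0"
  unfolding hcone_def by (auto intro: less_imp_le)

lemma hcone_Inf_nonneg: "u \<in> hcone \<alpha> K \<Longrightarrow> Inf (range u) \<ge> 0"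
  by (rule cInf_greatest) (auto intro: hcone_nonneg)

lemma hcone_Inf_le: "u \<in> hcone \<alpha> K \<Longrightarrow> Inf (range u) \<le> u y"
  using hcone_nonneg[of u \<alpha> K] by (intro cInf_lower bdd_belowI[of _ 0]) auto

lemma hcone_le_Sup:
  fixes u :: "'y::metric_space \<Rightarrow> real"
  assumes "u \<in> hcone \<alpha> K" "bounded (UNIV::'y set)" "\<alpha> \<ge> 0"
  shows "u y \<le> Sup (range u)"
  using holder_bdd_above[OF hcone_holder[OF assms(1)] assms(2,3)] by (simp add: cSup_upper)

lemma hcone_mono:
  assumes "u \<in> hcone \<alpha> K" "K \<le> K'"
  shows "u \<in> hcone \<alpha> K'"
proof -
  have "K * Inf (range u) \<le> K' * Inf (range u)"
    using hcone_Inf_nonneg[OF assms(1)] assms(2) by (rule mult_right_mono[rotated])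
  then show ?thesis using assms(1) unfolding hcone_def by auto
qed

lemma hcone_Sup_le_Inf:
  fixes u :: "'y::metric_space \<Rightarrow> real"
  assumes "u \<in> hcone \<alpha> K" "bounded (UNIV::'y set)" "\<alpha> \<ge> 0"
  shows "Sup (range u) \<le> Inf (range u) * (1 + K * diameter (UNIV::'y set) powr \<alpha>)"
proof (cases "u = (\<lambda>_. 0)")
  case False
  note u' = hcone_nonzeroD[OF assms(1) False]
  have "holder_semi dist \<alpha> u * diameter (UNIV::'y set) powr \<alpha>
      \<le> K * Inf (range u) * diameter (UNIV::'y set) powr \<alpha>"
    using u'(3) by (rule mult_right_mono) simp
  then show ?thesis
    using holder_Sup_le_Inf[OF u'(2) assms(2,3)] by (simp add: algebra_simps)
qed simp

lemma hcone_Inf_pos: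
  fixes u :: "'y::metric_space \<Rightarrow> real"
  assumes u: "u \<in> hcone \<alpha> K" "u \<noteq> (\<lambda>_. 0)"
  shows "Inf (range u) > 0"
proof (rule ccontr)
  assume "\<not> Inf (range u) > 0"
  then have Inf0: "Inf (range u) = 0" using hcone_Inf_nonneg[OF u(1)] by linarith
  note u' = hcone_nonzeroD[OF u]
  have "holder_semi dist \<alpha> u = 0"
    using u'(3) Inf0 holder_semi_nonneg[OF u'(2)] by simp
  then have "u a = u b" for a b using holder_semi_bound[OF u'(2), of a b] by simp
  then have "range u = {u undefined}" by auto
  then show False using Inf0 u'(1) by (metis cInf_singleton less_irrefl)
qed

lemma const_in_hcone:
  assumes "c > 0" "K \<ge> 0"
  shows "(\<lambda>_::'y::metric_space. c) \<in> hcone \<alpha> K"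
proof -
  have "holder_semi dist \<alpha> (\<lambda>_::'y. c) \<le> 0" by (rule holder_semi_le) auto
  moreover have "holder dist \<alpha> (\<lambda>_::'y. c)" unfolding holder_def by (auto intro: exI[of _ 0])
  ultimately show ?thesis using assms unfolding hcone_def by (auto intro: order_trans)
qed

text \<open>The slack between the cone constants z K and K absorbs the subtraction.\<close>
lemma hcone_subtract:
  fixes u v :: "'y::metric_space \<Rightarrow> real" and \<alpha> z K t :: real
  defines "R \<equiv> 1 + z * K * diameter (UNIV::'y set) powr \<alpha>"
  assumes bnd: "bounded (UNIV::'y set)" and "\<alpha> > 0" and z: "0 \<le> z" "z < 1" and "K > 0"
    and u: "u \<in> hcone \<alpha> (z * K)" and v: "v \<in> hcone \<alpha> (z * K)" "v \<noteq> (\<lambda>_. 0)"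
    and t: "t \<ge> 0"
    and small: "2 * t * Sup (range v) * R \<le> (1 - z) * Sup (range u)"
  shows "(\<lambda>y. u y - t * v y) \<in> hcone \<alpha> K"
proof (cases "t = 0")
  case True
  then show ?thesis using hcone_mono[OF u] z \<open>K > 0\<close> by (simp add: mult_le_cancel_right1)
next
  case False
  have R1: "R \<ge> 1" unfolding R_def using z \<open>K > 0\<close> by simp
  note v' = hcone_nonzeroD[OF v]
  have v_Sup: "v y \<le> Sup (range v)" for y using hcone_le_Sup[OF v(1) bnd] \<open>\<alpha> > 0\<close> by simp
  have Sup_v: "Sup (range v) > 0" using v_Sup v'(1) by (meson less_le_trans)
  have "u \<noteq> (\<lambda>_. 0)"
  proof
    assume "u = (\<lambda>_. 0)"
    then have "2 * t * Sup (range v) * R \<le> 0" using small by simp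
    moreover have "2 * t * Sup (range v) * R > 0" using False t Sup_v R1 by simp
    ultimately show False by simp
  qed
  note u' = hcone_nonzeroD[OF u this]
  have u_Inf: "Inf (range u) > 0" by (rule hcone_Inf_pos[OF u \<open>u \<noteq> _\<close>])
  have "Sup (range u) \<le> Inf (range u) * R"
    using hcone_Sup_le_Inf[OF u bnd less_imp_le[OF \<open>\<alpha> > 0\<close>]] unfolding R_def by simp
  then have "2 * t * Sup (range v) * R \<le> ((1 - z) * Inf (range u)) * R"
    using small z by (simp add: mult.assoc mult_left_mono order_trans)
  then have gap: "2 * t * Sup (range v) \<le> (1 - z) * Inf (range u)" using R1 by simp
  define w where "w = (\<lambda>y. u y - t * v y)"
  have w_low: "Inf (range u) - t * Sup (range v) \<le> w y" for y
    using hcone_Inf_le[OF u, of y] mult_left_mono[OF v_Sup t, of y] unfolding w_def by linarith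
  have "t * Sup (range v) > 0" using False t Sup_v by simp
  moreover have "(1 - z) * Inf (range u) \<le> Inf (range u)" using z u_Inf by simp
  ultimately have "Inf (range u) - t * Sup (range v) > 0" using gap by linarith
  then have w_pos: "\<forall>y. w y > 0" using w_low by (meson less_le_trans)
  have w_eq: "w = (\<lambda>y. 0 + 1 * u y + (- t) * v y)" unfolding w_def by simp
  have w_holder: "holder dist \<alpha> w" unfolding w_eq by (rule holder_affine(1)[OF u'(2) v'(2)])
  have "holder_semi dist \<alpha> w \<le> holder_semi dist \<alpha> u + t * holder_semi dist \<alpha> v"
    unfolding w_eq using holder_affine(2)[OF u'(2) v'(2), of 0 1 "-t"] t by simp
  also have "\<dots> \<le> z * K * Inf (range u) + t * (z * K * Inf (range v))"
    using u'(3) mult_left_mono[OF v'(3) t] by linarith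
  also have "\<dots> \<le> K * (Inf (range u) - t * Sup (range v))"
  proof -
    have "Inf (range v) \<le> Sup (range v)" using hcone_Inf_le[OF v(1)] v_Sup order_trans by blast
    then have "z * Inf (range v) \<le> Sup (range v)"
      using z hcone_Inf_nonneg[OF v(1)] by (meson less_imp_le mult_left_le_one_le order_trans)
    then have "t * (z * Inf (range v)) \<le> t * Sup (range v)" using t by (rule mult_left_mono)
    then have "z * Inf (range u) + t * (z * Inf (range v)) + t * Sup (range v) \<le> Inf (range u)"
      using gap by (simp add: algebra_simps)
    then have "K * (z * Inf (range u) + t * (z * Inf (range v)) + t * Sup (range v))
        \<le> K * Inf (range u)"
      using \<open>K > 0\<close> by simp
    then show ?thesis by (simp add: algebra_simps)
  qed
  also have "\<dots> \<le> K * Inf (range w)"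
    using w_low \<open>K > 0\<close> by (intro mult_left_mono cInf_greatest) auto
  finally show ?thesis using w_pos w_holder unfolding hcone_def w_def by auto
qed

lemma hcone_reflect:
  fixes \<psi> :: "'y::metric_space \<Rightarrow> real"
  assumes \<psi>: "\<psi> \<in> hcone \<alpha> K" and bnd: "bounded (UNIV::'y set)" and "\<alpha> > 0" "K \<ge> 0"
  shows "(\<lambda>y. (Sup (range \<psi>) + Inf (range \<psi>)) - \<psi> y) \<in> hcone \<alpha> K"
proof (cases "\<psi> = (\<lambda>_. 0)")
  case False
  note \<psi>' = hcone_nonzeroD[OF \<psi> False]
  define b where "b = Sup (range \<psi>) + Inf (range \<psi>)"
  have w_eq: "(\<lambda>y. b - \<psi> y) = (\<lambda>y. b + (-1) * \<psi> y + 0 * \<psi> y)" by simp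
  have low: "Inf (range \<psi>) \<le> b - \<psi> y" for y
    using hcone_le_Sup[OF \<psi> bnd, of y] \<open>\<alpha> > 0\<close> unfolding b_def by simp
  have "holder_semi dist \<alpha> (\<lambda>y. b - \<psi> y) \<le> holder_semi dist \<alpha> \<psi>"
    unfolding w_eq using holder_affine(2)[OF \<psi>'(2) \<psi>'(2), of b "-1" 0] by simp
  also have "\<dots> \<le> K * Inf (range \<psi>)" by (rule \<psi>'(3))
  also have "\<dots> \<le> K * Inf (range (\<lambda>y. b - \<psi> y))"
    using low \<open>K \<ge> 0\<close> by (intro mult_left_mono cInf_greatest) auto
  finally have "holder_semi dist \<alpha> (\<lambda>y. b - \<psi> y) \<le> K * Inf (range (\<lambda>y. b - \<psi> y))" .
  moreover have "\<forall>y. b - \<psi> y > 0" using low hcone_Inf_pos[OF \<psi> False] by (meson less_le_trans)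
  moreover have "holder dist \<alpha> (\<lambda>y. b - \<psi> y)"
    unfolding w_eq by (rule holder_affine(1)[OF \<psi>'(2) \<psi>'(2)])
  ultimately show ?thesis unfolding hcone_def b_def by auto
qed simp

lemma hcone_integrable:
  fixes u :: "'y::metric_space \<Rightarrow> real"
  assumes "u \<in> hcone \<alpha> K" "bounded (UNIV::'y set)" "\<alpha> > 0"
    and "finite_measure \<sigma>" "sets \<sigma> = sets borel"
  shows "integrable \<sigma> u"
proof -
  have "u \<in> borel_measurable borel"
    using holder_continuous_on[OF hcone_holder[OF assms(1)] assms(3)]
    by (rule borel_measurable_continuous_onI)
  then have "u \<in> borel_measurable \<sigma>" using measurable_cong_sets assms(5) by blast
  moreover have "\<bar>u y\<bar> \<le> Sup (range u)" for y
    using hcone_le_Sup[OF assms(1,2)] hcone_nonneg[OF assms(1)] assms(3) by simp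
  ultimately show ?thesis
    by (intro finite_measure.integrable_const_bound[OF assms(4), of _ "Sup (range u)"]) auto
qed

lemma Lop_linear:
  "Lop g \<phi> x (\<lambda>y. s * u y + t * v y) = (\<lambda>y. s * Lop g \<phi> x u y + t * Lop g \<phi> x v y)"
  unfolding Lop_def by (simp add: fun_eq_iff sum.distrib sum_distrib_left algebra_simps)

lemma Lop_diff:
  "Lop g \<phi> x (\<lambda>y. u y - t * v y) = (\<lambda>y. Lop g \<phi> x u y - t * Lop g \<phi> x v y)"
  using Lop_linear[of g \<phi> x 1 u "-t" v] by simp

lemma Lop_diff':
  "Lop g \<phi> x (\<lambda>y. t * v y - u y) = (\<lambda>y. t * Lop g \<phi> x v y - Lop g \<phi> x u y)"
  using Lop_linear[of g \<phi> x t v "-1" u] by simp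

lemma Lop_pos:
  assumes "finite (g x -` {y})" "g x -` {y} \<noteq> {}" "\<And>y. \<psi> y > 0"
  shows "Lop g \<phi> x \<psi> y > 0"
  unfolding Lop_def using assms by (intro sum_pos) auto

lemma Lpow_finite_weighted_sum:
  assumes fin: "\<And>x y. finite (g x -` {y})"
  shows "\<exists>P W. finite P \<and> (\<forall>z. W z \<ge> 0) \<and> (\<forall>\<psi>. Lpow f g \<phi> n x \<psi> y = (\<Sum>z\<in>P. W z * \<psi> z))"
proof (induction n arbitrary: y)
  case 0
  show ?case by (intro exI[of _ "{y}"] exI[of _ "\<lambda>_. 1"]) simp
next
  case (Suc n)
  from Suc obtain P W where PW: "\<And>y1. finite (P y1)" "\<And>y1 z. W y1 z \<ge> 0"
     "\<And>y1 \<psi>. Lpow f g \<phi> n x \<psi> y1 = (\<Sum>z\<in>P y1. W y1 z * \<psi> z)" by metis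
  define Q where "Q = g ((f^^n) x) -` {y}"
  define P' where "P' = \<Union> (P ` Q)"
  define c where "c y1 = exp (\<phi> ((f^^n) x, y1))" for y1
  define W' where "W' z = (\<Sum>y1\<in>Q. c y1 * (if z \<in> P y1 then W y1 z else 0))" for z
  have "finite Q" unfolding Q_def by (rule fin)
  then have "finite P'" unfolding P'_def using PW(1) by auto
  have "W' z \<ge> 0" for z unfolding W'_def c_def using PW(2) by (intro sum_nonneg) auto
  moreover have "Lpow f g \<phi> (Suc n) x \<psi> y = (\<Sum>z\<in>P'. W' z * \<psi> z)" for \<psi>
  proof -
    have "Lpow f g \<phi> (Suc n) x \<psi> y = (\<Sum>y1\<in>Q. c y1 * (\<Sum>z\<in>P y1. W y1 z * \<psi> z))"
      by (simp add: Lop_def Q_def c_def PW(3))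
    also have "\<dots> = (\<Sum>y1\<in>Q. \<Sum>z\<in>P'. c y1 * ((if z \<in> P y1 then W y1 z else 0) * \<psi> z))"
    proof (rule sum.cong[OF refl])
      fix y1 assume "y1 \<in> Q"
      then have "P' \<inter> P y1 = P y1" unfolding P'_def by auto
      then have "(\<Sum>z\<in>P y1. W y1 z * \<psi> z) = (\<Sum>z\<in>P'. if z \<in> P y1 then W y1 z * \<psi> z else 0)"
        using sum.inter_restrict[OF \<open>finite P'\<close>, of "\<lambda>z. W y1 z * \<psi> z" "P y1"] by simp
      then show "c y1 * (\<Sum>z\<in>P y1. W y1 z * \<psi> z)
          = (\<Sum>z\<in>P'. c y1 * ((if z \<in> P y1 then W y1 z else 0) * \<psi> z))"
        by (simp add: sum_distrib_left) (auto intro!: sum.cong)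
    qed
    also have "\<dots> = (\<Sum>z\<in>P'. W' z * \<psi> z)"
      unfolding W'_def by (subst sum.swap) (simp add: sum_distrib_right mult.assoc)
    finally show ?thesis .
  qed
  ultimately show ?case using \<open>finite P'\<close> by blast
qed

section \<open>Contraction of cone brackets\<close>

locale cone_contraction =
  fixes f :: "'x \<Rightarrow> 'x" and g :: "'x \<Rightarrow> 'y::metric_space \<Rightarrow> 'y" and \<phi> :: "'x \<times> 'y \<Rightarrow> real"
    and \<alpha> K z :: real
  assumes bounded: "bounded (UNIV::'y set)" and \<alpha>_pos: "\<alpha> > 0"
    and z: "0 \<le> z" "z < 1" and K_pos: "K > 0"
    and Lop_contracts: "\<And>x \<psi>. \<psi> \<in> hcone \<alpha> K \<Longrightarrow> Lop g \<phi> x \<psi> \<in> hcone \<alpha> (z * K)"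
    and Lop_nonzero: "\<And>x \<psi>. \<psi> \<in> hcone \<alpha> K \<Longrightarrow> \<psi> \<noteq> (\<lambda>_. 0) \<Longrightarrow> Lop g \<phi> x \<psi> \<noteq> (\<lambda>_. 0)"
begin

abbreviation "LP n x \<psi> \<equiv> Lpow f g \<phi> n x \<psi>"
abbreviation "one \<equiv> (\<lambda>_::'y. 1::real)"

definition R :: real where "R = 1 + z * K * diameter (UNIV::'y set) powr \<alpha>"

definition \<kappa> :: real where "\<kappa> = (1 - z) / (4 * R)"

definition \<theta> :: real where "\<theta> = 1 - \<kappa>"

lemma R_ge_1: "R \<ge> 1"
  unfolding R_def using z K_pos by simp

lemma \<kappa>_bounds: "0 < \<kappa>" "\<kappa> < 1"
  unfolding \<kappa>_def using z R_ge_1 by (auto simp: divide_less_eq)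

lemma \<theta>_bounds: "0 < \<theta>" "\<theta> < 1"
  unfolding \<theta>_def using \<kappa>_bounds by auto

lemma Lop_in_hcone: "\<psi> \<in> hcone \<alpha> K \<Longrightarrow> Lop g \<phi> x \<psi> \<in> hcone \<alpha> K"
  using z K_pos by (intro hcone_mono[OF Lop_contracts]) (auto simp: mult_le_cancel_right1)

lemma Lpow_in_hcone: "\<psi> \<in> hcone \<alpha> K \<Longrightarrow> LP n x \<psi> \<in> hcone \<alpha> K"
  by (induction n) (auto intro: Lop_in_hcone)

lemma one_in_hcone: "one \<in> hcone \<alpha> K"
  using const_in_hcone[of 1 K] K_pos by simp

lemma Lpow_one_nonzero: "LP n x one \<noteq> (\<lambda>_. 0)"
proof (induction n)
  case (Suc n)
  then show ?case using Lop_nonzero[OF Lpow_in_hcone[OF one_in_hcone]] by simp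
qed (simp add: fun_eq_iff)

lemma Lpow_one_pos: "LP n x one y > 0"
  using hcone_nonzeroD(1)[OF Lpow_in_hcone[OF one_in_hcone] Lpow_one_nonzero] by blast

definition cone_bracket :: "'x \<Rightarrow> ('y \<Rightarrow> real) \<Rightarrow> nat \<Rightarrow> real \<Rightarrow> real \<Rightarrow> bool" where
  "cone_bracket x \<psi> k a b \<longleftrightarrow> a \<le> b
     \<and> (\<lambda>y. LP k x \<psi> y - a * LP k x one y) \<in> hcone \<alpha> K
     \<and> (\<lambda>y. b * LP k x one y - LP k x \<psi> y) \<in> hcone \<alpha> K"

lemma cone_bracket_propagates:
  assumes "cone_bracket x \<psi> k a b" "k \<le> n"
  shows "(\<lambda>y. LP n x \<psi> y - a * LP n x one y) \<in> hcone \<alpha> K"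
    and "(\<lambda>y. b * LP n x one y - LP n x \<psi> y) \<in> hcone \<alpha> K"
  using assms(2)
proof (induction n rule: dec_induct)
  case base
  { case 1 show ?case using assms(1) unfolding cone_bracket_def by auto }
  { case 2 show ?case using assms(1) unfolding cone_bracket_def by auto }
next
  case (step n)
  { case 1 show ?case using Lop_in_hcone[OF step.IH(1)] by (simp add: Lop_diff) }
  { case 2 show ?case using Lop_in_hcone[OF step.IH(2)] by (simp add: Lop_diff') }
qed

lemma cone_bracket_ratio:
  assumes "cone_bracket x \<psi> k a b" "k \<le> n"
  shows "a \<le> LP n x \<psi> y / LP n x one y" "LP n x \<psi> y / LP n x one y \<le> b"
  using hcone_nonneg[OF cone_bracket_propagates(1)[OF assms], of y]
    hcone_nonneg[OF cone_bracket_propagates(2)[OF assms], of y] Lpow_one_pos[of n x y]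
  by (simp_all add: le_divide_eq divide_le_eq)

lemma cone_bracket_initial:
  assumes "\<psi> \<in> hcone \<alpha> K"
  shows "cone_bracket x \<psi> 0 0 (Sup (range \<psi>) + Inf (range \<psi>))"
proof -
  have "0 \<le> Sup (range \<psi>)"
    using hcone_nonneg[OF assms] hcone_le_Sup[OF assms bounded] \<alpha>_pos by (meson less_imp_le order_trans)
  then show ?thesis
    using hcone_Inf_nonneg[OF assms] hcone_reflect[OF assms bounded \<alpha>_pos] assms K_pos
    unfolding cone_bracket_def by simp
qed

text \<open>One of the two gaps to the bracket ends carries at least half of the mass of the
  transferred constant; subtracting a fixed fraction of that constant from it keeps it in the cone
  and shrinks the bracket by the factor \<theta>.\<close>
lemma cone_bracket_step:
  assumes "cone_bracket x \<psi> k a b"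
  shows "\<exists>a' b'. cone_bracket x \<psi> (Suc k) a' b' \<and> b' - a' \<le> \<theta> * (b - a)"
proof (cases "a = b")
  case True
  then show ?thesis
    using assms cone_bracket_propagates[OF assms, of "Suc k"] unfolding cone_bracket_def by auto
next
  case False
  then have ab: "b - a > 0" using assms unfolding cone_bracket_def by simp
  define L where "L = Lop g \<phi> ((f^^k) x)"
  define u where "u = (\<lambda>y. L (LP k x \<psi>) y - a * L (LP k x one) y)"
  define w where "w = (\<lambda>y. b * L (LP k x one) y - L (LP k x \<psi>) y)"
  define v where "v = L (LP k x one)"
  have u: "u \<in> hcone \<alpha> (z * K)" and w: "w \<in> hcone \<alpha> (z * K)"
    using assms Lop_contracts unfolding cone_bracket_def u_def w_def L_def
    by (auto simp flip: Lop_diff Lop_diff')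
  have v: "v \<in> hcone \<alpha> (z * K)" "v \<noteq> (\<lambda>_. 0)"
    using Lop_contracts Lop_nonzero Lpow_in_hcone one_in_hcone Lpow_one_nonzero
    unfolding v_def L_def by auto
  have "(b - a) * v y \<le> u y + w y" for y
    unfolding u_def w_def v_def by (simp add: algebra_simps)
  then have Sup_sum: "(b - a) * Sup (range v) \<le> Sup (range u) + Sup (range w)"
    using ab \<alpha>_pos holder_bdd_above[OF hcone_holder[OF u] bounded]
      holder_bdd_above[OF hcone_holder[OF w] bounded] by (intro Sup_le_Sup_add) auto
  define t where "t = \<kappa> * (b - a)"
  have t: "0 \<le> t" "t \<le> b - a" using \<kappa>_bounds ab unfolding t_def by (auto simp: mult_left_le_one_le less_imp_le)
  have small: "2 * t * Sup (range v) * R \<le> (1 - z) * s"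
    if "(b - a) * Sup (range v) / 2 \<le> s" for s
  proof -
    have "2 * t * Sup (range v) * R = (1 - z) * ((b - a) * Sup (range v) / 2)"
      unfolding t_def \<kappa>_def using R_ge_1 by (simp add: field_simps)
    also have "\<dots> \<le> (1 - z) * s" using that z by (intro mult_left_mono) auto
    finally show ?thesis .
  qed
  have LP_Suc: "LP (Suc k) x \<psi> = L (LP k x \<psi>)" "LP (Suc k) x one = L (LP k x one)"
    unfolding L_def by simp_all
  have zK: "z * K \<le> K" using z K_pos by (simp add: mult_le_cancel_right1)
  consider "(b - a) * Sup (range v) / 2 \<le> Sup (range u)" | "(b - a) * Sup (range v) / 2 \<le> Sup (range w)"
    using Sup_sum by linarith
  then show ?thesis
  proof cases
    case 1
    have "(\<lambda>y. u y - t * v y) \<in> hcone \<alpha> K"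
      using hcone_subtract[OF bounded \<alpha>_pos z K_pos u v t(1)] small[OF 1] unfolding R_def .
    then have "cone_bracket x \<psi> (Suc k) (a + t) b"
      using t hcone_mono[OF w zK] unfolding cone_bracket_def LP_Suc u_def v_def w_def
      by (simp add: algebra_simps)
    then show ?thesis by (intro exI[of _ "a + t"] exI[of _ b]) (simp add: t_def \<theta>_def algebra_simps)
  next
    case 2
    have "(\<lambda>y. w y - t * v y) \<in> hcone \<alpha> K"
      using hcone_subtract[OF bounded \<alpha>_pos z K_pos w v t(1)] small[OF 2] unfolding R_def .
    then have "cone_bracket x \<psi> (Suc k) a (b - t)"
      using t hcone_mono[OF u zK] unfolding cone_bracket_def LP_Suc u_def v_def w_def
      by (simp add: algebra_simps)
    then show ?thesis by (intro exI[of _ a] exI[of _ "b - t"]) (simp add: t_def \<theta>_def algebra_simps)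
  qed
qed

lemma cone_bracket_exists:
  assumes "\<psi> \<in> hcone \<alpha> K"
  shows "\<exists>a b. cone_bracket x \<psi> k a b \<and> b - a \<le> 2 * sup_norm \<psi> * \<theta> ^ k"
proof (induction k)
  case 0
  have "sup_norm \<psi> = Sup (range \<psi>)"
    unfolding sup_norm_def using hcone_nonneg[OF assms] by (metis abs_of_nonneg)
  moreover have "Inf (range \<psi>) \<le> Sup (range \<psi>)"
    using hcone_Inf_le[OF assms] hcone_le_Sup[OF assms bounded] \<alpha>_pos by (meson less_imp_le order_trans)
  ultimately show ?case using cone_bracket_initial[OF assms] by (intro exI) auto
next
  case (Suc k)
  then obtain a b where "cone_bracket x \<psi> k a b" "b - a \<le> 2 * sup_norm \<psi> * \<theta> ^ k" by blast
  moreover obtain a' b' where "cone_bracket x \<psi> (Suc k) a' b'" "b' - a' \<le> \<theta> * (b - a)"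
    using cone_bracket_step calculation(1) by blast
  moreover have "\<theta> * (b - a) \<le> 2 * sup_norm \<psi> * \<theta> ^ Suc k"
    using mult_left_mono[OF calculation(2) less_imp_le[OF \<theta>_bounds(1)]] by (simp add: algebra_simps)
  ultimately show ?case by (intro exI[of _ a'] exI[of _ b']) auto
qed

lemma nu_int_in_cone_bracket:
  assumes "cone_bracket x \<psi> k a b" "k \<le> n" "\<psi> \<in> hcone \<alpha> K"
    and "prob_space \<sigma>" "sets \<sigma> = sets borel"
  shows "a \<le> nu_int f g \<phi> x n \<sigma> \<psi>" "nu_int f g \<phi> x n \<sigma> \<psi> \<le> b"
proof -
  have int: "integrable \<sigma> (LP n x u)" if "u \<in> hcone \<alpha> K" for u
    using hcone_integrable[OF Lpow_in_hcone[OF that] bounded \<alpha>_pos] assms(4,5)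
    by (simp add: prob_space_def)
  have "a * LP n x one y \<le> LP n x \<psi> y" "LP n x \<psi> y \<le> b * LP n x one y" for y
    using hcone_nonneg[OF cone_bracket_propagates(1)[OF assms(1,2)], of y]
      hcone_nonneg[OF cone_bracket_propagates(2)[OF assms(1,2)], of y] by auto
  moreover have "Inf (range (LP n x one)) \<le> LP n x one y" for y
    using hcone_Inf_le[OF Lpow_in_hcone[OF one_in_hcone]] .
  moreover have "Inf (range (LP n x one)) > 0"
    using hcone_Inf_pos[OF Lpow_in_hcone[OF one_in_hcone] Lpow_one_nonzero] .
  ultimately show "a \<le> nu_int f g \<phi> x n \<sigma> \<psi>" "nu_int f g \<phi> x n \<sigma> \<psi> \<le> b"
    unfolding nu_int_def
    using integral_ratio_between[OF assms(4) int[OF assms(3)] int[OF one_in_hcone]] by blast+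
qed

lemma nu_int_cauchy:
  assumes "\<psi> \<in> hcone \<alpha> K" and \<sigma>: "\<And>n. prob_space (\<sigma> n) \<and> sets (\<sigma> n) = sets borel"
    and "k \<le> m" "k \<le> n"
  shows "\<bar>nu_int f g \<phi> x n (\<sigma> n) \<psi> - nu_int f g \<phi> x m (\<sigma> m) \<psi>\<bar> \<le> 2 * sup_norm \<psi> * \<theta> ^ k"
proof -
  obtain a b where br: "cone_bracket x \<psi> k a b" and width: "b - a \<le> 2 * sup_norm \<psi> * \<theta> ^ k"
    using cone_bracket_exists[OF assms(1)] by blast
  have "a \<le> nu_int f g \<phi> x n (\<sigma> n) \<psi>" "nu_int f g \<phi> x n (\<sigma> n) \<psi> \<le> b"
    "a \<le> nu_int f g \<phi> x m (\<sigma> m) \<psi>" "nu_int f g \<phi> x m (\<sigma> m) \<psi> \<le> b"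
    using nu_int_in_cone_bracket[OF br _ assms(1)] \<sigma> \<open>k \<le> n\<close> \<open>k \<le> m\<close> by blast+
  then show ?thesis using width by (simp add: abs_le_iff)
qed

end

section \<open>Coding a compact metric space into the unit interval\<close>

definition ternary :: "(nat \<Rightarrow> bool) \<Rightarrow> real" where
  "ternary b = (\<Sum>k. (if b k then 2 else 0) / 3 ^ Suc k)"

lemma geometric_thirds_sums: "(\<lambda>k. c / 3 ^ k :: real) sums (c * 3 / 2)"
proof -
  have "(\<lambda>k. (1/3::real) ^ k) sums (3 / 2)"
    using geometric_sums[of "1/3::real"] by simp
  then have "(\<lambda>k. c * (1/3::real) ^ k) sums (c * (3 / 2))" by (rule sums_mult)
  then show ?thesis by (simp add: power_divide)
qed

lemma ternary_digits_summable: "summable (\<lambda>k. (if b k then 2 else 0) / 3 ^ Suc k :: real)"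
  by (rule summable_comparison_test[OF _ sums_summable[OF geometric_thirds_sums[of 2]]])
     (auto simp: divide_le_eq field_simps)

lemma ternary_bounds: "0 \<le> ternary b" "ternary b \<le> 1"
proof -
  show "0 \<le> ternary b" unfolding ternary_def by (intro suminf_nonneg ternary_digits_summable) auto
  have "(\<lambda>k. 2 / 3 ^ Suc k :: real) sums 1"
    using geometric_thirds_sums[of "2/3"] by (simp add: divide_divide_eq_left)
  have "ternary b \<le> (\<Sum>k. 2 / 3 ^ Suc k)"
    unfolding ternary_def
    by (intro suminf_le ternary_digits_summable sums_summable[OF \<open>_ sums 1\<close>]) auto
  then show "ternary b \<le> 1" using sums_unique[OF \<open>_ sums 1\<close>] by simp
qed

text \<open>The digits 0 and 2 are used so that the tail after the first differing digit cannot make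
  up for it.\<close>
lemma ternary_first_difference:
  assumes "b i \<noteq> b' i" "\<And>j. j < i \<Longrightarrow> b j = b' j"
  shows "\<bar>ternary b - ternary b'\<bar> \<ge> 1 / 3 ^ Suc i"
proof -
  define D where "D k = (if b k then 2 else 0) / 3 ^ Suc k - (if b' k then 2 else 0) / (3 ^ Suc k :: real)" for k
  have sD: "summable D" unfolding D_def by (intro summable_diff ternary_digits_summable)
  have "ternary b - ternary b' = suminf D"
    unfolding ternary_def D_def by (rule suminf_diff) (rule ternary_digits_summable)+
  also have "\<dots> = (\<Sum>n. D (n + Suc i)) + sum D {..<Suc i}"
    by (rule suminf_split_initial_segment[OF sD])
  also have "sum D {..<Suc i} = D i"
    using assms(2) by (simp add: D_def)
  finally have diff: "ternary b - ternary b' = (\<Sum>n. D (n + Suc i)) + D i" .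
  have Di: "\<bar>D i\<bar> = 2 / 3 ^ Suc i" using assms(1) by (cases "b i") (auto simp: D_def)
  define Y :: "nat \<Rightarrow> real" where "Y n = (2 / 3 ^ (i + 2)) / 3 ^ n" for n
  have Y: "Y sums (1 / 3 ^ Suc i)"
    using geometric_thirds_sums[of "2 / 3 ^ (i + 2)"] unfolding Y_def by (simp add: field_simps)
  have tail_le: "\<bar>D (n + Suc i)\<bar> \<le> Y n" for n
    unfolding D_def Y_def by (auto simp: power_add field_simps)
  have sT: "summable (\<lambda>n. D (n + Suc i))" using sD by (rule summable_ignore_initial_segment)
  have "\<bar>\<Sum>n. D (n + Suc i)\<bar> \<le> (\<Sum>n. \<bar>D (n + Suc i)\<bar>)"
    using sT tail_le by (intro summable_rabs) (auto intro: summable_comparison_test' sums_summable[OF Y])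
  also have "\<dots> \<le> suminf Y"
    using tail_le by (intro suminf_le sums_summable[OF Y] summable_comparison_test'[OF sums_summable[OF Y]]) auto
  also have "\<dots> = 1 / 3 ^ Suc i" using Y by (rule sums_unique[symmetric])
  finally show ?thesis unfolding diff using Di by linarith
qed

lemma ternary_close_imp_prefix_eq:
  assumes "\<bar>ternary b - ternary b'\<bar> < 1 / 3 ^ N" "k < N"
  shows "b k = b' k"
proof (rule ccontr)
  assume "b k \<noteq> b' k"
  define i where "i = (LEAST i. b i \<noteq> b' i)"
  have "b i \<noteq> b' i" "i \<le> k"
    unfolding i_def using \<open>b k \<noteq> b' k\<close> by (rule LeastI, rule Least_le)
  moreover have "\<And>j. j < i \<Longrightarrow> b j = b' j" unfolding i_def using not_less_Least by blast
  ultimately have "1 / 3 ^ Suc i \<le> \<bar>ternary b - ternary b'\<bar>" by (intro ternary_first_difference)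
  moreover have "(1::real) / 3 ^ N \<le> 1 / 3 ^ Suc i"
    using \<open>i \<le> k\<close> assms(2) by (intro divide_left_mono power_increasing) auto
  ultimately show False using assms(1) by linarith
qed

lemma compact_separating_balls:
  assumes "compact (UNIV::'y::metric_space set)"
  obtains c :: "nat \<Rightarrow> 'y::metric_space" and r :: "nat \<Rightarrow> real" where
    "\<And>\<epsilon>. \<epsilon> > 0 \<Longrightarrow> \<exists>N. \<forall>y y'. (\<forall>k<N. (dist (c k) y < r k) = (dist (c k) y' < r k)) \<longrightarrow> dist y y' < \<epsilon>"
proof -
  have "\<exists>F. finite F \<and> (UNIV::'y set) \<subseteq> (\<Union>x\<in>F. ball x (1/2^j))" for j :: nat
  proof -
    have "(1::real) / 2 ^ j > 0" by simp
    then show ?thesis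
      using seq_compact_imp_totally_bounded[OF compact_imp_seq_compact[OF assms]] by blast
  qed
  then obtain F where F: "\<And>j. finite (F j)" "\<And>j. (UNIV::'y set) \<subseteq> (\<Union>x\<in>F j. ball x (1/2^j))"
    by metis
  define T where "T = Sigma UNIV F"
  have "T \<noteq> {}" unfolding T_def using F(2)[of 0] by auto
  moreover have "countable T" unfolding T_def using F(1) by (auto intro: countable_finite)
  ultimately have h: "range (from_nat_into T) = T" by (rule range_from_nat_into)
  define h where "h = from_nat_into T"
  define c where "c k = snd (h k)" for k
  define r where "r k = (1::real) / 2 ^ fst (h k)" for k
  have "\<exists>N. \<forall>y y'. (\<forall>k<N. (dist (c k) y < r k) = (dist (c k) y' < r k)) \<longrightarrow> dist y y' < \<epsilon>"
    if "\<epsilon> > 0" for \<epsilon>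
  proof -
    obtain j :: nat where "(1/2::real) ^ j < \<epsilon> / 2"
      using real_arch_pow_inv[of "\<epsilon>/2" "1/2"] \<open>\<epsilon> > 0\<close> by auto
    then have j: "2 / 2 ^ j < \<epsilon>" by (simp add: power_one_over)
    define idx where "idx x = inv h (j, x)" for x
    have idx: "h (idx x) = (j, x)" if "x \<in> F j" for x
      unfolding idx_def h_def using that h by (intro f_inv_into_f) (auto simp: T_def)
    obtain N where N: "idx ` F j \<subseteq> {..<N}"
      using finite_nat_bounded[OF finite_imageI[OF F(1)]] by blast
    have "dist y y' < \<epsilon>" if same: "\<forall>k<N. (dist (c k) y < r k) = (dist (c k) y' < r k)" for y y'
    proof -
      obtain x where x: "x \<in> F j" "dist x y < 1/2^j" using F(2)[of j] by (auto simp: subset_eq)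
      have "idx x < N" using N x(1) by auto
      then have "(dist (c (idx x)) y < r (idx x)) = (dist (c (idx x)) y' < r (idx x))"
        using same by blast
      moreover have "c (idx x) = x" "r (idx x) = 1/2^j" using idx[OF x(1)] by (simp_all add: c_def r_def)
      ultimately have "dist x y' < 1/2^j" using x(2) by simp
      then show ?thesis using x(2) j by metric
    qed
    then show ?thesis by blast
  qed
  then show ?thesis using that by blast
qed

lemma compact_metric_space_injective_code:
  assumes "compact (UNIV::'y::metric_space set)"
  obtains e :: "'y::metric_space \<Rightarrow> real" where "inj e" "range e \<subseteq> {0..1}"
    "uniformly_continuous_on (range e) (inv e)"
proof -
  obtain c :: "nat \<Rightarrow> 'y" and r :: "nat \<Rightarrow> real" where sep: "\<And>\<epsilon>. \<epsilon> > 0 \<Longrightarrow>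
      \<exists>N. \<forall>y y'. (\<forall>k<N. (dist (c k) y < r k) = (dist (c k) y' < r k)) \<longrightarrow> dist y y' < \<epsilon>"
    by (rule compact_separating_balls[OF assms]) (rule that)
  define e where "e y = ternary (\<lambda>k. dist (c k) y < r k)" for y
  have close: "\<exists>\<delta>>0. \<forall>y y'. \<bar>e y - e y'\<bar> < \<delta> \<longrightarrow> dist y y' < \<epsilon>" if \<epsilon>: "\<epsilon> > 0" for \<epsilon>
  proof -
    obtain N where N: "\<forall>y y'. (\<forall>k<N. (dist (c k) y < r k) = (dist (c k) y' < r k)) \<longrightarrow> dist y y' < \<epsilon>"
      using sep[OF \<epsilon>] by blast
    have "dist y y' < \<epsilon>" if "\<bar>e y - e y'\<bar> < 1 / 3 ^ N" for y y'
    proof -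
      have "(dist (c k) y < r k) = (dist (c k) y' < r k)" if "k < N" for k
        using ternary_close_imp_prefix_eq[of "\<lambda>k. dist (c k) y < r k" "\<lambda>k. dist (c k) y' < r k" N k]
          \<open>\<bar>e y - e y'\<bar> < 1 / 3 ^ N\<close> that
        unfolding e_def by simp
      then show ?thesis using N by blast
    qed
    then show ?thesis by (intro exI[of _ "1 / 3 ^ N"]) auto
  qed
  have "inj e"
  proof (rule injI, rule ccontr)
    fix y y' assume "e y = e y'" "y \<noteq> y'"
    then obtain \<delta> where "\<delta> > 0" "\<forall>z z'. \<bar>e z - e z'\<bar> < \<delta> \<longrightarrow> dist z z' < dist y y'"
      using close[of "dist y y'"] by auto
    then show False using \<open>e y = e y'\<close> by (metis abs_0 diff_self less_irrefl)
  qed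
  moreover have "uniformly_continuous_on (range e) (inv e)"
    unfolding uniformly_continuous_on_def
  proof (intro allI impI)
    fix \<epsilon> :: real assume "\<epsilon> > 0"
    then obtain \<delta> where \<delta>: "\<delta> > 0" "\<And>y y'. \<bar>e y - e y'\<bar> < \<delta> \<Longrightarrow> dist y y' < \<epsilon>"
      using close by blast
    have "dist (inv e (e y')) (inv e (e y)) < \<epsilon>" if "dist (e y') (e y) < \<delta>" for y y'
      using \<delta>(2)[of y' y] that \<open>inj e\<close> by (simp add: dist_real_def)
    then show "\<exists>\<delta>>0. \<forall>x\<in>range e. \<forall>x'\<in>range e. dist x' x < \<delta> \<longrightarrow> dist (inv e x') (inv e x) < \<epsilon>"
      using \<delta>(1) by blast
  qed
  moreover have "range e \<subseteq> {0..1}" unfolding e_def using ternary_bounds by (simp add: image_subset_iff)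
  ultimately show ?thesis using that by blast
qed

lemma uniformly_continuous_on_extend_closure_compact:
  fixes f :: "'a::metric_space \<Rightarrow> 'b::metric_space"
  assumes "uniformly_continuous_on X f" "compact (UNIV::'b set)"
  obtains h where "uniformly_continuous_on (closure X) h" "\<And>x. x \<in> X \<Longrightarrow> h x = f x"
proof -
  have "mcomplete_of (euclidean_metric :: 'b metric)"
    using compact_imp_complete[OF assms(2)] by (simp add: euclidean_metric_def)
  then show ?thesis
    using uniformly_continuous_map_extends_to_closure_of[of euclidean_metric
        "euclidean_metric :: 'a metric" X f] assms that
    by auto
qed

text \<open>The code e is not continuous, but its inverse extends continuously to the closure of its
  range; this is all that is needed to transport weak limits from the real line back to Y.\<close>
lemma compact_metric_space_real_code:
  assumes "compact (UNIV::'y::metric_space set)"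
  obtains e :: "'y::metric_space \<Rightarrow> real" and p S where "closed S" "S \<subseteq> {0..1}" "\<And>y. e y \<in> S"
    "continuous_on S p" "\<And>y. p (e y) = y"
proof -
  obtain e :: "'y \<Rightarrow> real" where e: "inj e" "range e \<subseteq> {0..1}"
    "uniformly_continuous_on (range e) (inv e)"
    using compact_metric_space_injective_code[OF assms] by blast
  obtain p where p: "uniformly_continuous_on (closure (range e)) p"
    "\<And>t. t \<in> range e \<Longrightarrow> p t = inv e t"
    using uniformly_continuous_on_extend_closure_compact[OF e(3) assms] by blast
  have "closure (range e) \<subseteq> {0..1}" using e(2) by (simp add: closure_minimal)
  moreover have "p (e y) = y" for y using p(2)[of "e y"] e(1) by simp
  ultimately show ?thesis
    using that[of "closure (range e)" e p] p(1) uniformly_continuous_imp_continuous closure_subset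
    by blast
qed

section \<open>Weak limits of finitely supported measures on a compact space\<close>

lemma real_distributions_weak_limit_in_closed:
  fixes \<mu> :: "nat \<Rightarrow> real measure" and S :: "real set"
  assumes \<mu>: "\<And>n. real_distribution (\<mu> n)" and S: "closed S" "S \<subseteq> {0..1}"
    and supp: "\<And>n. AE t in \<mu> n. t \<in> S"
  obtains r M where "strict_mono r" "real_distribution M" "AE t in M. t \<in> S"
    "\<And>(G :: real \<Rightarrow> real) B. continuous_on UNIV G \<Longrightarrow> (\<And>t. \<bar>G t\<bar> \<le> B) \<Longrightarrow>
       (\<lambda>k. \<integral>t. G t \<partial>\<mu> (r k)) \<longlonglongrightarrow> (\<integral>t. G t \<partial>M)"
proof -
  have "measure (\<mu> n) {-1<..2} = 1" for n
  proof -
    interpret real_distribution "\<mu> n" by (rule \<mu>)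
    have "AE t in \<mu> n. t \<in> {-1<..2}"
      by (rule eventually_mono[OF supp[of n]]) (use S(2) in auto)
    then show ?thesis by (subst prob_eq_1) auto
  qed
  then have "tight \<mu>"
    unfolding tight_def using \<mu>
    by (intro conjI allI impI exI[of _ "-1::real"] exI[of _ "2::real"]) auto
  then obtain r M where r: "strict_mono r" "real_distribution M" "weak_conv_m (\<lambda>k. \<mu> (r k)) M"
    using tight_imp_convergent_subsubsequence[of \<mu> id] strict_mono_id by (auto simp: comp_def)
  interpret M: real_distribution M by (rule r(2))
  have conv: "(\<lambda>k. \<integral>t. G t \<partial>\<mu> (r k)) \<longlonglongrightarrow> (\<integral>t. G t \<partial>M)"
    if "continuous_on UNIV G" "\<And>t. \<bar>G t\<bar> \<le> B" for G :: "real \<Rightarrow> real" and B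
    using that \<mu> by (intro weak_conv_imp_integral_bdd_continuous_conv[OF _ r(2,3)])
      (auto simp: continuous_on_eq_continuous_at)
  have "S \<noteq> {}"
  proof
    assume "S = {}"
    interpret real_distribution "\<mu> 0" by (rule \<mu>)
    show False using supp[of 0] \<open>S = {}\<close> by simp
  qed
  define h where "h t = min 1 (infdist t S)" for t
  have h_cont: "continuous_on UNIV h" unfolding h_def by (intro continuous_intros)
  have h_bound: "\<bar>h t\<bar> \<le> 1" for t unfolding h_def using infdist_nonneg[of t S] by auto
  have h_zero: "h t = 0 \<longleftrightarrow> t \<in> S" for t
    unfolding h_def using in_closed_iff_infdist_zero[OF S(1) \<open>S \<noteq> {}\<close>] infdist_nonneg[of t S]
    by (auto simp: min_def)
  have h_meas: "h \<in> borel_measurable (\<mu> n)" for n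
    using borel_measurable_continuous_onI[OF h_cont] real_distribution.events_eq_borel[OF \<mu>]
    by (simp cong: measurable_cong_sets)
  have "(\<integral>t. h t \<partial>\<mu> n) = 0" for n
    using supp[of n] h_zero h_meas by (subst integral_cong_AE[where g="\<lambda>_. 0"]) auto
  then have "(\<integral>t. h t \<partial>M) = 0"
    using conv[OF h_cont h_bound] by (simp add: LIMSEQ_const_iff)
  moreover have "integrable M h"
    using h_bound borel_measurable_continuous_onI[OF h_cont]
    by (intro M.integrable_const_bound[of _ 1]) (auto cong: measurable_cong_sets)
  moreover have "AE t in M. 0 \<le> h t" by (simp add: h_def infdist_nonneg)
  ultimately have "AE t in M. h t = 0" using integral_nonneg_eq_0_iff_AE by blast
  then have "AE t in M. t \<in> S" using h_zero by simp
  then show ?thesis using that r(1,2) conv by blast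
qed

lemma point_measure_distr_real:
  fixes e :: "'a \<Rightarrow> real" and W :: "'a \<Rightarrow> real"
  assumes "finite P" "\<And>z. W z \<ge> 0" "(\<Sum>z\<in>P. W z) = 1" "\<And>z. e z \<in> S" "S \<in> sets borel"
  defines "\<mu> \<equiv> distr (point_measure P (\<lambda>z. ennreal (W z))) borel e"
  shows "real_distribution \<mu>" "AE t in \<mu>. t \<in> S"
    "\<And>G. G \<in> borel_measurable borel \<Longrightarrow> (\<integral>t. G t \<partial>\<mu>) = (\<Sum>z\<in>P. W z * G (e z))"
proof -
  have pm: "prob_space (point_measure P (\<lambda>z. ennreal (W z)))"
    using assms(1-3) by (intro prob_space_point_measure) (auto simp: sum_ennreal)
  have e_meas: "e \<in> measurable (point_measure P (\<lambda>z. ennreal (W z))) borel" by simp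
  show "real_distribution \<mu>"
    unfolding real_distribution_def real_distribution_axioms_def \<mu>_def
    using prob_space.prob_space_distr[OF pm e_meas] by simp
  show "AE t in \<mu>. t \<in> S"
    unfolding \<mu>_def using assms(4,5) by (subst AE_distr_iff[OF e_meas]) auto
  show "(\<integral>t. G t \<partial>\<mu>) = (\<Sum>z\<in>P. W z * G (e z))" if "G \<in> borel_measurable borel" for G
  proof -
    have "(\<integral>t. G t \<partial>\<mu>) = (\<integral>z. G (e z) \<partial>point_measure P (\<lambda>z. ennreal (W z)))"
      unfolding \<mu>_def by (rule integral_distr[OF e_meas that])
    also have "\<dots> = (\<Sum>z\<in>P. W z * G (e z))"
      using assms(1,2) by (subst lebesgue_integral_point_measure_finite) auto
    finally show ?thesis .
  qed
qed

lemma finite_prob_weights_weak_limit: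
  fixes P :: "nat \<Rightarrow> 'y::metric_space set" and W :: "nat \<Rightarrow> 'y \<Rightarrow> real"
  assumes cpt: "compact (UNIV::'y set)"
    and P: "\<And>n. finite (P n)" and W: "\<And>n z. W n z \<ge> 0" and W_sum: "\<And>n. (\<Sum>z\<in>P n. W n z) = 1"
  obtains \<nu> r where "prob_space \<nu>" "sets \<nu> = sets borel" "strict_mono r"
    "\<And>\<psi>. continuous_on UNIV \<psi> \<Longrightarrow> (\<lambda>k. \<Sum>z\<in>P (r k). W (r k) z * \<psi> z) \<longlonglongrightarrow> (\<integral>y. \<psi> y \<partial>\<nu>)"
proof -
  obtain e :: "'y \<Rightarrow> real" and p S where
    S: "closed S" "S \<subseteq> {0..1}" and eS: "\<And>y. e y \<in> S" and p: "continuous_on S p" "\<And>y. p (e y) = y"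
    by (rule compact_metric_space_real_code[OF cpt]) (rule that)
  define \<mu> where "\<mu> n = distr (point_measure (P n) (\<lambda>z. ennreal (W n z))) borel e" for n
  have \<mu>: "real_distribution (\<mu> n)" "AE t in \<mu> n. t \<in> S"
    "\<And>G. G \<in> borel_measurable borel \<Longrightarrow> (\<integral>t. G t \<partial>\<mu> n) = (\<Sum>z\<in>P n. W n z * G (e z))" for n
    unfolding \<mu>_def
    using point_measure_distr_real[where P="P n" and W="W n" and e=e and S=S, OF P W W_sum eS borel_closed[OF S(1)]]
    by blast+
  obtain r M where r: "strict_mono r" and M: "real_distribution M" "AE t in M. t \<in> S"
    and conv: "\<And>(G :: real \<Rightarrow> real) B. continuous_on UNIV G \<Longrightarrow> (\<And>t. \<bar>G t\<bar> \<le> B) \<Longrightarrow>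
       (\<lambda>k. \<integral>t. G t \<partial>\<mu> (r k)) \<longlonglongrightarrow> (\<integral>t. G t \<partial>M)"
    by (rule real_distributions_weak_limit_in_closed[where \<mu>=\<mu>, OF \<mu>(1) S \<mu>(2)]) blast
  interpret M: real_distribution M by (rule M(1))
  define p' where "p' t = (if t \<in> S then p t else p (e undefined))" for t
  have "p' \<in> borel_measurable borel"
    unfolding p'_def using S(1) borel_measurable_continuous_on_restrict[OF p(1)]
    by (intro measurable_If_restrict_space_iff[THEN iffD2]) auto
  then have p'_meas: "p' \<in> measurable M borel" by (simp cong: measurable_cong_sets)
  define \<nu> where "\<nu> = distr M borel p'"
  have lim: "(\<lambda>k. \<Sum>z\<in>P (r k). W (r k) z * \<psi> z) \<longlonglongrightarrow> (\<integral>y. \<psi> y \<partial>\<nu>)"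
    if \<psi>: "continuous_on UNIV \<psi>" for \<psi> :: "'y \<Rightarrow> real"
  proof -
    obtain B where B: "\<And>y. \<bar>\<psi> y\<bar> \<le> B"
      using compact_imp_bounded[OF compact_continuous_image[OF \<psi> cpt]] unfolding bounded_iff by auto
    have "continuous_on S (\<psi> \<circ> p)" using continuous_on_subset[OF \<psi>] p(1) by (intro continuous_on_compose) auto
    then obtain G where G: "continuous_on UNIV G" "\<And>t. t \<in> S \<Longrightarrow> G t = \<psi> (p t)" "\<And>t. \<bar>G t\<bar> \<le> B"
      using Tietze[of S "\<psi> \<circ> p" UNIV B] S(1) B order_trans[OF abs_ge_zero B] by auto
    have G_meas: "G \<in> borel_measurable borel" by (rule borel_measurable_continuous_onI[OF G(1)])
    have \<psi>_meas: "\<psi> \<in> borel_measurable borel" by (rule borel_measurable_continuous_onI[OF \<psi>])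
    have "(\<integral>y. \<psi> y \<partial>\<nu>) = (\<integral>t. \<psi> (p' t) \<partial>M)"
      unfolding \<nu>_def by (rule integral_distr[OF p'_meas \<psi>_meas])
    also have "\<dots> = (\<integral>t. G t \<partial>M)"
    proof (rule integral_cong_AE)
      show "(\<lambda>t. \<psi> (p' t)) \<in> borel_measurable M" by (rule measurable_compose[OF p'_meas \<psi>_meas])
      show "G \<in> borel_measurable M" using G_meas by (simp cong: measurable_cong_sets)
      show "AE t in M. \<psi> (p' t) = G t" using M(2) by eventually_elim (simp add: p'_def G(2))
    qed
    finally show ?thesis
      using conv[OF G(1) G(3)] G(2) eS p(2) \<mu>(3)[OF G_meas] by simp
  qed
  show ?thesis
    using that[OF _ _ r lim] M.prob_space_distr[OF p'_meas] unfolding \<nu>_def by simp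
qed

context cone_contraction
begin

lemma transfer_ratio_weak_limit:
  assumes cpt: "compact (UNIV::'y set)" and fin: "\<And>x y. finite (g x -` {y})"
  obtains \<nu> r where "prob_space \<nu>" "sets \<nu> = sets borel" "strict_mono r"
    "\<And>\<psi>. continuous_on UNIV \<psi> \<Longrightarrow>
       (\<lambda>j. LP (r j) x \<psi> y' / LP (r j) x one y') \<longlonglongrightarrow> (\<integral>y. \<psi> y \<partial>\<nu>)"
proof -
  have "\<forall>n. \<exists>P W. finite P \<and> (\<forall>z. W z \<ge> 0) \<and> (\<forall>\<psi>. LP n x \<psi> y' = (\<Sum>z\<in>P. W z * \<psi> z))"
    by (intro allI Lpow_finite_weighted_sum[OF fin])
  then obtain P W where PW: "\<And>n. finite (P n)" "\<And>n z. W n z \<ge> 0"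
      "\<And>n \<psi>. LP n x \<psi> y' = (\<Sum>z\<in>P n. W n z * \<psi> z)"
    unfolding choice_iff by blast
  define W' where "W' n z = W n z / LP n x one y'" for n z
  have W'_ratio: "(\<Sum>z\<in>P n. W' n z * \<psi> z) = LP n x \<psi> y' / LP n x one y'" for n \<psi>
    unfolding W'_def PW(3) by (simp add: sum_divide_distrib)
  have W'_nonneg: "W' n z \<ge> 0" for n z
    unfolding W'_def using PW(2)[of n z] Lpow_one_pos[of n x y'] by simp
  have W'_sum: "(\<Sum>z\<in>P n. W' n z) = 1" for n
    using W'_ratio[of n one] Lpow_one_pos[of n x y'] by simp
  obtain \<nu> r where \<nu>: "prob_space \<nu>" "sets \<nu> = sets borel" "strict_mono r"
    and lim: "\<And>\<psi>. continuous_on UNIV \<psi> \<Longrightarrow>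
      (\<lambda>k. \<Sum>z\<in>P (r k). W' (r k) z * \<psi> z) \<longlonglongrightarrow> (\<integral>y. \<psi> y \<partial>\<nu>)"
    by (rule finite_prob_weights_weak_limit[where W=W', OF cpt PW(1) W'_nonneg W'_sum]) blast
  show ?thesis by (rule that[OF \<nu> lim[unfolded W'_ratio]])
qed

text \<open>Any weak limit of the ratios inherits every cone bracket, and the brackets shrink
  geometrically.\<close>
lemma nu_int_limit_measure:
  assumes cpt: "compact (UNIV::'y set)" and fin: "\<And>x y. finite (g x -` {y})"
    and \<sigma>: "\<And>n. prob_space (\<sigma> n) \<and> sets (\<sigma> n) = sets borel"
  obtains \<nu> where "prob_space \<nu>" "sets \<nu> = sets borel"
    "\<And>\<psi> n. \<psi> \<in> hcone \<alpha> K \<Longrightarrow>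
       \<bar>nu_int f g \<phi> x n (\<sigma> n) \<psi> - (\<integral>y. \<psi> y \<partial>\<nu>)\<bar> \<le> 2 * sup_norm \<psi> * \<theta> ^ n"
proof -
  obtain \<nu> r where \<nu>: "prob_space \<nu>" "sets \<nu> = sets borel" "strict_mono r"
    and lim: "\<And>\<psi>. continuous_on UNIV \<psi> \<Longrightarrow>
      (\<lambda>j. LP (r j) x \<psi> undefined / LP (r j) x one undefined) \<longlonglongrightarrow> (\<integral>y. \<psi> y \<partial>\<nu>)"
    by (rule transfer_ratio_weak_limit[where x=x and y'=undefined, OF cpt fin]) blast
  have in_bracket: "a \<le> (\<integral>y. \<psi> y \<partial>\<nu>) \<and> (\<integral>y. \<psi> y \<partial>\<nu>) \<le> b"
    if \<psi>: "\<psi> \<in> hcone \<alpha> K" and br: "cone_bracket x \<psi> k a b" for \<psi> k a b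
  proof -
    note ratio_lim = lim[OF holder_continuous_on[OF hcone_holder[OF \<psi>] \<alpha>_pos]]
    have "k \<le> r j" if "k \<le> j" for j using seq_suble[OF \<nu>(3), of j] that by simp
    then have "a \<le> LP (r j) x \<psi> undefined / LP (r j) x one undefined"
      "LP (r j) x \<psi> undefined / LP (r j) x one undefined \<le> b" if "k \<le> j" for j
      using cone_bracket_ratio[OF br] that by blast+
    then show ?thesis
      using LIMSEQ_le_const[OF ratio_lim, of a] LIMSEQ_le_const2[OF ratio_lim, of b] by blast
  qed
  have "\<bar>nu_int f g \<phi> x n (\<sigma> n) \<psi> - (\<integral>y. \<psi> y \<partial>\<nu>)\<bar> \<le> 2 * sup_norm \<psi> * \<theta> ^ n"
    if \<psi>: "\<psi> \<in> hcone \<alpha> K" for \<psi> n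
  proof -
    obtain a b where br: "cone_bracket x \<psi> n a b" and width: "b - a \<le> 2 * sup_norm \<psi> * \<theta> ^ n"
      using cone_bracket_exists[OF \<psi>] by blast
    have "a \<le> nu_int f g \<phi> x n (\<sigma> n) \<psi>" "nu_int f g \<phi> x n (\<sigma> n) \<psi> \<le> b"
      using nu_int_in_cone_bracket[OF br order_refl \<psi>] \<sigma> by blast+
    then show ?thesis using in_bracket[OF \<psi> br] width by (simp add: abs_le_iff)
  qed
  then show ?thesis using that \<nu>(1,2) by blast
qed

lemma nu_int_convergence:
  assumes "compact (UNIV::'y set)" and "\<And>x y. finite (g x -` {y})"
  shows "\<forall>x. \<forall>\<sigma> :: nat \<Rightarrow> 'y measure.
       (\<forall>n. prob_space (\<sigma> n) \<and> sets (\<sigma> n) = sets borel) \<longrightarrow>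
         (\<forall>k m n. \<forall>\<psi>\<in>hcone \<alpha> K. k \<le> m \<longrightarrow> k \<le> n \<longrightarrow>
            \<bar>nu_int f g \<phi> x n (\<sigma> n) \<psi> - nu_int f g \<phi> x m (\<sigma> m) \<psi>\<bar> \<le> 2 * sup_norm \<psi> * \<theta> ^ k)
       \<and> (\<exists>\<nu> :: 'y measure. prob_space \<nu> \<and> sets \<nu> = sets borel \<and>
            (\<forall>\<psi>\<in>hcone \<alpha> K. (\<lambda>n. nu_int f g \<phi> x n (\<sigma> n) \<psi>) \<longlonglongrightarrow> (\<integral>y. \<psi> y \<partial>\<nu>)) \<and>
            (\<forall>n. \<forall>\<psi>\<in>hcone \<alpha> K.
               \<bar>nu_int f g \<phi> x n (\<sigma> n) \<psi> - (\<integral>y. \<psi> y \<partial>\<nu>)\<bar> \<le> 2 * sup_norm \<psi> * \<theta> ^ n))"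
proof (intro allI impI conjI ballI)
  fix x and \<sigma> :: "nat \<Rightarrow> 'y measure"
  assume \<sigma>: "\<forall>n. prob_space (\<sigma> n) \<and> sets (\<sigma> n) = sets borel"
  show "\<bar>nu_int f g \<phi> x n (\<sigma> n) \<psi> - nu_int f g \<phi> x m (\<sigma> m) \<psi>\<bar> \<le> 2 * sup_norm \<psi> * \<theta> ^ k"
    if "\<psi> \<in> hcone \<alpha> K" "k \<le> m" "k \<le> n" for k m n \<psi>
    using nu_int_cauchy[where \<sigma>=\<sigma>, OF that(1) \<sigma>[rule_format] that(2,3)] .
  obtain \<nu> where "prob_space \<nu>" "sets \<nu> = sets borel" and rate: "\<And>\<psi> n. \<psi> \<in> hcone \<alpha> K \<Longrightarrow>
      \<bar>nu_int f g \<phi> x n (\<sigma> n) \<psi> - (\<integral>y. \<psi> y \<partial>\<nu>)\<bar> \<le> 2 * sup_norm \<psi> * \<theta> ^ n"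
    by (rule nu_int_limit_measure[where \<sigma>=\<sigma> and x=x, OF assms \<sigma>[rule_format]]) blast
  then show "\<exists>\<nu> :: 'y measure. prob_space \<nu> \<and> sets \<nu> = sets borel \<and>
      (\<forall>\<psi>\<in>hcone \<alpha> K. (\<lambda>n. nu_int f g \<phi> x n (\<sigma> n) \<psi>) \<longlonglongrightarrow> (\<integral>y. \<psi> y \<partial>\<nu>)) \<and>
      (\<forall>n. \<forall>\<psi>\<in>hcone \<alpha> K.
         \<bar>nu_int f g \<phi> x n (\<sigma> n) \<psi> - (\<integral>y. \<psi> y \<partial>\<nu>)\<bar> \<le> 2 * sup_norm \<psi> * \<theta> ^ n)"
    using LIMSEQ_of_geometric_bound[OF rate less_imp_le[OF \<theta>_bounds(1)] \<theta>_bounds(2)] by blast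
qed

end

lemma standing_setting_fibre_facts:
  fixes g :: "'x::metric_space \<Rightarrow> 'y::metric_space \<Rightarrow> 'y"
  assumes "standing_setting f g \<gamma> d Lf Lc A \<U> q \<phi> \<alpha> \<epsilon>"
  shows "compact (UNIV::'y set)" "finite (g x -` {y})" "card (g x -` {y}) = d" "q < d" "0 < \<alpha>"
    "zeta_const TYPE('y) \<epsilon> d q \<gamma> Lc \<alpha> < 1"
  using assms unfolding standing_setting_def compact_conn_geodesic_space_def by auto

lemma cone_contraction_of_standing_setting:
  fixes g :: "'x::metric_space \<Rightarrow> 'y::metric_space \<Rightarrow> 'y"
  assumes setting: "standing_setting f g \<gamma> d Lf Lc A \<U> q \<phi> \<alpha> \<epsilon>" and "K > 0"
    and K_inv: "\<forall>x. \<forall>\<psi>\<in>hcone \<alpha> K. Lop g \<phi> x \<psi> \<in> hcone \<alpha> (zeta_const TYPE('y) \<epsilon> d q \<gamma> Lc \<alpha> * K)"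
  shows "cone_contraction g \<phi> \<alpha> K (max 0 (zeta_const TYPE('y) \<epsilon> d q \<gamma> Lc \<alpha>))"
    (is "cone_contraction _ _ _ _ (max 0 ?\<zeta>)")
proof
  note facts = standing_setting_fibre_facts[OF setting]
  show "bounded (UNIV::'y set)" using facts(1) by (rule compact_imp_bounded)
  show "\<alpha> > 0" "K > 0" "0 \<le> max 0 ?\<zeta>" "max 0 ?\<zeta> < 1" using facts(5,6) \<open>K > 0\<close> by auto
  show "Lop g \<phi> x \<psi> \<in> hcone \<alpha> (max 0 ?\<zeta> * K)" if "\<psi> \<in> hcone \<alpha> K" for x \<psi>
  proof (rule hcone_mono)
    show "Lop g \<phi> x \<psi> \<in> hcone \<alpha> (?\<zeta> * K)" using K_inv that by blast
    show "?\<zeta> * K \<le> max 0 ?\<zeta> * K" using \<open>K > 0\<close> by (intro mult_right_mono) auto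
  qed
  show "Lop g \<phi> x \<psi> \<noteq> (\<lambda>_. 0)" if "\<psi> \<in> hcone \<alpha> K" "\<psi> \<noteq> (\<lambda>_. 0)" for x \<psi>
  proof -
    have "card (g x -` {undefined}) > 0" using facts(3,4) by simp
    then have "g x -` {undefined} \<noteq> {}" by (simp add: card_gt_0_iff)
    then have "Lop g \<phi> x \<psi> undefined > 0"
      by (rule Lop_pos[OF facts(2)]) (use hcone_nonzeroD(1)[OF that] in blast)
    then show ?thesis by (intro notI) simp
  qed
qed

theorem proposition3p6:
  fixes f :: "'x::metric_space \<Rightarrow> 'x" and g :: "'x \<Rightarrow> 'y::metric_space \<Rightarrow> 'y"
    and \<gamma> :: real and d :: nat and Lf :: "'x \<times> 'y \<Rightarrow> real" and Lc :: real
    and A :: "('x \<times> 'y) set" and \<U> :: "('x \<times> 'y) set set" and q :: nat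
    and \<phi> :: "'x \<times> 'y \<Rightarrow> real" and \<alpha> \<epsilon> K :: real
  assumes setting: "standing_setting f g \<gamma> d Lf Lc A \<U> q \<phi> \<alpha> \<epsilon>"
    and K_pos: "K > 0"
    and K_inv: "\<forall>x. \<forall>\<psi>\<in>hcone \<alpha> K.
                  Lop g \<phi> x \<psi> \<in> hcone \<alpha> (zeta_const TYPE('y) \<epsilon> d q \<gamma> Lc \<alpha> * K)"
  shows "\<exists>C1 > 0. \<exists>\<tau>. 0 < \<tau> \<and> \<tau> < 1 \<and>
    (\<forall>x. \<forall>\<sigma> :: nat \<Rightarrow> 'y measure.
       (\<forall>n. prob_space (\<sigma> n) \<and> sets (\<sigma> n) = sets borel) \<longrightarrow>
         (\<forall>k m n. \<forall>\<psi>\<in>hcone \<alpha> K. k \<le> m \<longrightarrow> k \<le> n \<longrightarrow>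
            \<bar>nu_int f g \<phi> x n (\<sigma> n) \<psi> - nu_int f g \<phi> x m (\<sigma> m) \<psi>\<bar>
              \<le> C1 * sup_norm \<psi> * \<tau> ^ k)
       \<and> (\<exists>\<nu> :: 'y measure. prob_space \<nu> \<and> sets \<nu> = sets borel \<and>
            (\<forall>\<psi>\<in>hcone \<alpha> K.
               (\<lambda>n. nu_int f g \<phi> x n (\<sigma> n) \<psi>) \<longlonglongrightarrow> (\<integral>y. \<psi> y \<partial>\<nu>)) \<and>
            (\<forall>n. \<forall>\<psi>\<in>hcone \<alpha> K.
               \<bar>nu_int f g \<phi> x n (\<sigma> n) \<psi> - (\<integral>y. \<psi> y \<partial>\<nu>)\<bar> \<le> C1 * sup_norm \<psi> * \<tau> ^ n)))"
proof -
  interpret cone_contraction f g \<phi> \<alpha> K "max 0 (zeta_const TYPE('y) \<epsilon> d q \<gamma> Lc \<alpha>)"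
    using cone_contraction_of_standing_setting[OF setting K_pos K_inv] .
  note facts = standing_setting_fibre_facts[OF setting]
  show ?thesis
    using nu_int_convergence[OF facts(1,2)] \<theta>_bounds
    by (intro exI[of _ "2::real"] conjI exI[of _ \<theta>]) simp_all
qed

end
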